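(* Let $p$ be an odd prime and $N=C_p\times D_{2p}$, with $C_p=\langle c\rangle$ and $D_{2p}=\langle r,s\mid r^p=s^2=1,\ srs=r^{-1}\rangle$. Let $\varphi\in\mathrm{Aut}(N)$ be given by $\varphi(r)=r,\ \varphi(s)=rs,\ \varphi(c)=c$. Then the $p^2-p$ subgroups $$A_{k,l}=\langle (r,\varphi^k),(c,\varphi^l)\rangle,\quad 0\le k\le p-2,\ 0\le l\le p-1,$$ are isomorphic to $C_p\times C_p$ and are precisely the semiregular subgroups of order $p^2$ of $\mathrm{Hol}(N)$.
   Context: $\mathrm{Hol}(N)=N\rtimes\mathrm{Aut}(N)$, with elements $(x,\varphi)$, product $(x,\varphi)(y,\psi)=(x\varphi(y),\varphi\psi)$, acting on $N$ by $(x,\varphi)\cdot n=x\varphi(n)$. A subgroup is semiregular if all stabilizers of points of $N$ under this action are trivial. *)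

theory Defs
  imports "HOL-Algebra.Algebra"
begin

text \<open>The dihedral group D_{2p} of order 2p, realised concretely: the pair (i,e)
  stands for r^i s^e with 0 \<le> i < n, e \<in> {0,1}; then
  (r^i s^e)(r^j s^f) = r^(i + (-1)^e j) s^(e+f).\<close>
definition dihedral_group :: "nat \<Rightarrow> (int \<times> int) monoid" where
  "dihedral_group n =
     \<lparr>carrier = {0..<int n} \<times> {0..<2},
      monoid.mult = (\<lambda>(i,e) (j,f). ((i + (if e = 0 then j else - j)) mod int n, (e + f) mod 2)),
      one = (0, 0)\<rparr>"

definition holomorph :: "('a, 'b) monoid_scheme \<Rightarrow> ('a \<times> ('a \<Rightarrow> 'a)) monoid" where
  "holomorph N =
     \<lparr>carrier = carrier N \<times> auto N,
      monoid.mult = (\<lambda>(x, f) (y, g). (x \<otimes>\<^bsub>N\<^esub> f y, compose (carrier N) f g)),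
      one = (\<one>\<^bsub>N\<^esub>, (\<lambda>x \<in> carrier N. x))\<rparr>"

definition hol_act :: "('a, 'b) monoid_scheme \<Rightarrow> 'a \<times> ('a \<Rightarrow> 'a) \<Rightarrow> 'a \<Rightarrow> 'a" where
  "hol_act N h n = fst h \<otimes>\<^bsub>N\<^esub> (snd h) n"

definition semiregular :: "('a, 'b) monoid_scheme \<Rightarrow> ('a \<times> ('a \<Rightarrow> 'a)) set \<Rightarrow> bool" where
  "semiregular N H \<longleftrightarrow>
     (\<forall>n \<in> carrier N. \<forall>h \<in> H. hol_act N h n = n \<longrightarrow> h = \<one>\<^bsub>holomorph N\<^esub>)"

end

theory Submission
  imports Defs
begin

text \<open>Every automorphism of \<open>N = C\<^sub>p \<times> D\<^sub>2\<^sub>p\<close> has the form \<open>c \<mapsto> c\<^sup>a, r \<mapsto> r\<^sup>b, s \<mapsto> r\<^sup>t s\<close>: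
  it maps reflections to reflections and the central \<open>c\<close> into the centre. Hence an element of
  \<open>Hol(N)\<close> of order dividing \<open>p\<^sup>2\<close> is \<open>(c\<^sup>\<beta> r\<^sup>\<alpha>, \<phi>\<^sup>m)\<close>: \<open>a \<equiv> b \<equiv> 1\<close> by Fermat's little theorem, and
  no \<open>s\<close> occurs because the exponent of \<open>s\<close> is a homomorphism to \<open>\<int>/2\<close> while \<open>p\<^sup>2\<close> is odd.
  In a semiregular subgroup \<open>H\<close> of order \<open>p\<^sup>2\<close> only the identity fixes \<open>1 \<in> N\<close>, so \<open>(\<beta>, \<alpha>)\<close>
  determines the element and counting gives \<open>(r, \<phi>\<^sup>k), (c, \<phi>\<^sup>l) \<in> H\<close>, whence \<open>H = A\<^sub>k\<^sub>,\<^sub>l\<close>;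
  semiregularity at \<open>s\<close> excludes \<open>k \<equiv> -1\<close>. Conversely \<open>A\<^sub>k\<^sub>,\<^sub>l = {(c\<^sup>\<beta> r\<^sup>\<alpha>, \<phi>\<^sup>k\<^sup>\<alpha>\<^sup>+\<^sup>l\<^sup>\<beta>)}\<close> is
  isomorphic to \<open>C\<^sub>p \<times> C\<^sub>p\<close>, and an element fixing \<open>c\<^sup>\<gamma> r\<^sup>\<delta> s\<^sup>e\<close> has \<open>\<beta> \<equiv> 0\<close> and \<open>(1 + k e) \<alpha> \<equiv> 0\<close>.\<close>

section \<open>Fermat's little theorem\<close>

lemma power_Suc_prime_mod:
  fixes a p :: nat assumes "Factorial_Ring.prime p" shows "(a + 1) ^ p mod p = (a ^ p + 1) mod p"
proof -
  have p: "1 < p" using assms prime_gt_1_nat by blast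
  have "(a + 1) ^ p = (\<Sum>k\<le>p. (p choose k) * a ^ k)"
    using binomial[of a 1 p] by simp
  also have "{..p} = insert 0 (insert p {1..<p})" using p by auto
  finally have "(a + 1) ^ p = a ^ p + 1 + (\<Sum>k\<in>{1..<p}. (p choose k) * a ^ k)"
    using p by simp
  moreover have "p dvd (\<Sum>k\<in>{1..<p}. (p choose k) * a ^ k)"
    using assms p by (intro dvd_sum) (auto intro!: dvd_mult2 dvd_choose_prime)
  ultimately show ?thesis by auto
qed

lemma power_prime_mod_self:
  fixes a p :: nat assumes "Factorial_Ring.prime p" shows "a ^ p mod p = a mod p"
proof (induction a)
  case 0
  then show ?case using assms prime_gt_0_nat by (simp add: zero_power)
next
  case (Suc a)
  have "Suc a ^ p mod p = (a ^ p mod p + 1) mod p"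
    using power_Suc_prime_mod[OF assms] by (simp add: mod_Suc_eq)
  also have "\<dots> = Suc a mod p" using Suc by (simp add: mod_Suc_eq)
  finally show ?case .
qed

lemma power_prime_square_mod_eq_1:
  fixes a :: int and p :: nat
  assumes "Factorial_Ring.prime p" "0 \<le> a" "a < int p" "a ^ (p * p) mod int p = 1"
  shows "a = 1"
proof -
  define n where "n = nat a"
  have n: "a = int n" "n < p"
    using assms(2,3) by (simp_all add: n_def)
  have "int (n ^ (p * p) mod p) = 1"
    using assms(4) unfolding n(1) of_nat_power[symmetric] of_nat_mod[symmetric] .
  moreover have "n ^ (p * p) = (n ^ p) ^ p"
    by (simp add: power_mult)
  then have "n ^ (p * p) mod p = n mod p"
    using power_prime_mod_self[OF assms(1)] by metis
  ultimately show ?thesis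
    using n by simp
qed

lemma carrier_dihedral_group: "carrier (dihedral_group n) = {0..<int n} \<times> {0..<2}"
  by (simp add: dihedral_group_def)

lemma one_dihedral_group [simp]: "\<one>\<^bsub>dihedral_group n\<^esub> = (0, 0)"
  by (simp add: dihedral_group_def)

lemma mult_dihedral_group [simp]:
  "(i, e) \<otimes>\<^bsub>dihedral_group n\<^esub> (j, f) = ((i + (if e = 0 then j else - j)) mod int n, (e + f) mod 2)"
  by (simp add: dihedral_group_def)

lemma int_less_2_cases: "0 \<le> e \<Longrightarrow> e < 2 \<Longrightarrow> e = 0 \<or> e = (1::int)"
  by auto

lemma group_dihedral_group: assumes "n > 0" shows "group (dihedral_group n)"
proof (rule groupI)
  fix x y assume "x \<in> carrier (dihedral_group n)" "y \<in> carrier (dihedral_group n)"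
  then show "x \<otimes>\<^bsub>dihedral_group n\<^esub> y \<in> carrier (dihedral_group n)"
    using assms by (cases x; cases y) (auto simp: carrier_dihedral_group)
next
  fix x y z
  assume "x \<in> carrier (dihedral_group n)" "y \<in> carrier (dihedral_group n)" "z \<in> carrier (dihedral_group n)"
  then obtain i e j f k g where "x = (i, e)" "y = (j, f)" "z = (k, g)" "e \<in> {0, 1}" "f \<in> {0, 1}" "g \<in> {0, 1}"
    by (cases x; cases y; cases z) (auto simp: carrier_dihedral_group dest!: int_less_2_cases)
  then show "x \<otimes>\<^bsub>dihedral_group n\<^esub> y \<otimes>\<^bsub>dihedral_group n\<^esub> z = x \<otimes>\<^bsub>dihedral_group n\<^esub> (y \<otimes>\<^bsub>dihedral_group n\<^esub> z)"
    by (auto simp: mod_add_left_eq mod_add_right_eq mod_minus_eq mod_diff_right_eq algebra_simps)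
next
  fix x assume "x \<in> carrier (dihedral_group n)"
  then obtain i e where x: "x = (i, e)" "e \<in> {0, 1}" "0 \<le> i" "i < int n"
    by (cases x) (auto simp: carrier_dihedral_group dest!: int_less_2_cases)
  then show "\<one>\<^bsub>dihedral_group n\<^esub> \<otimes>\<^bsub>dihedral_group n\<^esub> x = x"
    by auto
  show "\<exists>y\<in>carrier (dihedral_group n). y \<otimes>\<^bsub>dihedral_group n\<^esub> x = \<one>\<^bsub>dihedral_group n\<^esub>"
  proof (cases "e = 0")
    case True
    then show ?thesis using x assms
      by (intro bexI[of _ "((- i) mod int n, 0)"]) (auto simp: carrier_dihedral_group mod_add_left_eq)
  next
    case False
    then show ?thesis using x assms
      by (intro bexI[of _ "(i, 1)"]) (auto simp: carrier_dihedral_group)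
  qed
qed (use assms in \<open>simp add: carrier_dihedral_group\<close>)

lemma carrier_AutoGroup [simp]: "carrier (AutoGroup N) = auto N"
  by (simp add: AutoGroup_def BijGroup_def)

lemma one_AutoGroup: "\<one>\<^bsub>AutoGroup N\<^esub> = (\<lambda>x \<in> carrier N. x)"
  by (simp add: AutoGroup_def BijGroup_def)

lemma mult_AutoGroup:
  "f \<in> auto N \<Longrightarrow> g \<in> auto N \<Longrightarrow> f \<otimes>\<^bsub>AutoGroup N\<^esub> g = compose (carrier N) f g"
  by (simp add: AutoGroup_def BijGroup_def auto_def)

lemma auto_closed: "f \<in> auto N \<Longrightarrow> x \<in> carrier N \<Longrightarrow> f x \<in> carrier N"
  by (auto simp: auto_def hom_def)

lemma auto_mult: "f \<in> auto N \<Longrightarrow> x \<in> carrier N \<Longrightarrow> y \<in> carrier N \<Longrightarrow> f (x \<otimes>\<^bsub>N\<^esub> y) = f x \<otimes>\<^bsub>N\<^esub> f y"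
  by (auto simp: auto_def hom_def)

lemma auto_extensional: "f \<in> auto N \<Longrightarrow> f \<in> extensional (carrier N)"
  by (auto simp: auto_def Bij_def)

lemma auto_inj: "f \<in> auto N \<Longrightarrow> inj_on f (carrier N)"
  by (auto simp: auto_def Bij_def bij_betw_def)

lemma group_hom_auto: "group N \<Longrightarrow> f \<in> auto N \<Longrightarrow> group_hom N N f"
  by (simp add: group_hom_def group_hom_axioms_def auto_def)

lemma carrier_holomorph [simp]: "carrier (holomorph N) = carrier N \<times> auto N"
  by (simp add: holomorph_def)

lemma mult_holomorph:
  "(x, f) \<otimes>\<^bsub>holomorph N\<^esub> (y, g) = (x \<otimes>\<^bsub>N\<^esub> f y, compose (carrier N) f g)"
  by (simp add: holomorph_def)

lemma one_holomorph: "\<one>\<^bsub>holomorph N\<^esub> = (\<one>\<^bsub>N\<^esub>, (\<lambda>x \<in> carrier N. x))"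
  by (simp add: holomorph_def)

lemma group_holomorph: assumes "group N" shows "group (holomorph N)"
proof -
  interpret N: group N by (rule assms)
  interpret Aut: group "AutoGroup N" by (rule N.AutoGroup)
  show ?thesis
  proof (rule groupI)
    fix x y assume "x \<in> carrier (holomorph N)" "y \<in> carrier (holomorph N)"
    then show "x \<otimes>\<^bsub>holomorph N\<^esub> y \<in> carrier (holomorph N)"
      using Aut.m_closed by (cases x; cases y) (auto simp: mult_holomorph auto_closed simp flip: mult_AutoGroup)
  next
    show "\<one>\<^bsub>holomorph N\<^esub> \<in> carrier (holomorph N)"
      by (simp add: one_holomorph N.id_in_auto)
  next
    fix x y z assume "x \<in> carrier (holomorph N)" "y \<in> carrier (holomorph N)" "z \<in> carrier (holomorph N)"
    then obtain a f b g c h where "x = (a, f)" "y = (b, g)" "z = (c, h)"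
      "a \<in> carrier N" "b \<in> carrier N" "c \<in> carrier N" "f \<in> auto N" "g \<in> auto N" "h \<in> auto N"
      by (cases x; cases y; cases z) auto
    then show "x \<otimes>\<^bsub>holomorph N\<^esub> y \<otimes>\<^bsub>holomorph N\<^esub> z = x \<otimes>\<^bsub>holomorph N\<^esub> (y \<otimes>\<^bsub>holomorph N\<^esub> z)"
      by (simp add: mult_holomorph auto_mult auto_closed N.m_assoc compose_def cong: restrict_cong)
  next
    fix x assume "x \<in> carrier (holomorph N)"
    then obtain a f where x: "x = (a, f)" "a \<in> carrier N" "f \<in> auto N" by (cases x) auto
    have "compose (carrier N) (\<lambda>x \<in> carrier N. x) f = f"
      using x Aut.l_one by (simp add: one_AutoGroup mult_AutoGroup N.id_in_auto)
    then show "\<one>\<^bsub>holomorph N\<^esub> \<otimes>\<^bsub>holomorph N\<^esub> x = x"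
      using x by (simp add: mult_holomorph one_holomorph)
    define g where "g = inv\<^bsub>AutoGroup N\<^esub> f"
    have g: "g \<in> auto N"
      using x Aut.inv_closed unfolding g_def by simp
    have g_f: "compose (carrier N) g f = (\<lambda>x \<in> carrier N. x)"
      using x g Aut.l_inv unfolding g_def by (metis carrier_AutoGroup mult_AutoGroup one_AutoGroup)
    have "g (inv\<^bsub>N\<^esub> a) \<otimes>\<^bsub>N\<^esub> g a = \<one>\<^bsub>N\<^esub>"
      using x g group_hom.hom_one[OF group_hom_auto[OF assms g]] by (simp flip: auto_mult)
    then show "\<exists>y\<in>carrier (holomorph N). y \<otimes>\<^bsub>holomorph N\<^esub> x = \<one>\<^bsub>holomorph N\<^esub>"
      using g g_f x by (intro bexI[of _ "(g (inv\<^bsub>N\<^esub> a), g)"]) (auto simp: mult_holomorph one_holomorph auto_closed)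
  qed
qed

lemma auto_eq_one_iff:
  assumes "group N" "f \<in> auto N" "x \<in> carrier N"
  shows "f x = \<one>\<^bsub>N\<^esub> \<longleftrightarrow> x = \<one>\<^bsub>N\<^esub>"
proof -
  interpret f: group_hom N N f by (rule group_hom_auto[OF assms(1,2)])
  show ?thesis
    using assms(3) auto_inj[OF assms(2)] f.hom_one by (metis f.G.one_closed inj_onD)
qed

lemma auto_involution:
  assumes "group N" "f \<in> auto N" "x \<in> carrier N" "x \<otimes>\<^bsub>N\<^esub> x = \<one>\<^bsub>N\<^esub>" "x \<noteq> \<one>\<^bsub>N\<^esub>"
  shows "f x \<otimes>\<^bsub>N\<^esub> f x = \<one>\<^bsub>N\<^esub>" and "f x \<noteq> \<one>\<^bsub>N\<^esub>"
proof -
  interpret f: group_hom N N f by (rule group_hom_auto[OF assms(1,2)])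
  show "f x \<otimes>\<^bsub>N\<^esub> f x = \<one>\<^bsub>N\<^esub>"
    using assms(3,4) by (metis f.hom_mult f.hom_one)
  show "f x \<noteq> \<one>\<^bsub>N\<^esub>"
    using assms(5) auto_eq_one_iff[OF assms(1-3)] by simp
qed

lemma pow_card_subgroup_eq_1:
  assumes "group G" "subgroup H G" "h \<in> H"
  shows "h [^]\<^bsub>G\<^esub> card H = \<one>\<^bsub>G\<^esub>"
proof -
  interpret G: group G by (rule assms(1))
  have "h [^]\<^bsub>G\<lparr>carrier := H\<rparr>\<^esub> order (G\<lparr>carrier := H\<rparr>) = \<one>\<^bsub>G\<lparr>carrier := H\<rparr>\<^esub>"
    using group.pow_order_eq_1[OF G.subgroup_imp_group[OF assms(2)]] assms(3) by simp
  then show ?thesis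
    by (simp add: order_def G.nat_pow_consistent[symmetric])
qed

lemma snd_hom_holomorph: "snd \<in> hom (holomorph N) (AutoGroup N)"
  by (rule homI) (auto simp: mult_holomorph mult_AutoGroup)

section \<open>Automorphisms of \<open>C\<^sub>p \<times> D\<^sub>2\<^sub>p\<close>\<close>

locale cyclic_dihedral =
  fixes p :: nat
  assumes prime: "Factorial_Ring.prime p" and odd: "odd p"
begin

abbreviation "N \<equiv> integer_mod_group p \<times>\<times> dihedral_group p"
abbreviation "P \<equiv> int p"

lemma p_ge_3: "p \<ge> 3"
proof -
  have "2 \<le> p" "p \<noteq> 2"
    using prime_ge_2_nat[OF prime] odd by auto
  then show ?thesis by linarith
qed

lemma prime_P: "Factorial_Ring.prime P"
  using prime by (simp add: prime_int_nat_transfer)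

lemma carrier_integer_mod_group_p [simp]: "carrier (integer_mod_group p) = {0..<P}"
  using p_ge_3 by (simp add: carrier_integer_mod_group)

lemma carrier_dihedral_group_p [simp]: "carrier (dihedral_group p) = {0..<P} \<times> {0..<2}"
  by (simp add: carrier_dihedral_group)

lemma carrier_N:
  "(\<beta>, (\<alpha>, e)) \<in> carrier N \<longleftrightarrow> 0 \<le> \<beta> \<and> \<beta> < P \<and> 0 \<le> \<alpha> \<and> \<alpha> < P \<and> (e = 0 \<or> e = 1)"
  by auto

lemma carrier_N_cases:
  assumes "x \<in> carrier N"
  obtains \<beta> \<alpha> e where "x = (\<beta>, (\<alpha>, e))" "0 \<le> \<beta>" "\<beta> < P" "0 \<le> \<alpha>" "\<alpha> < P" "e = 0 \<or> e = 1"
  using assms by (cases x) (auto dest!: int_less_2_cases)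

lemma group_N: "group N"
  using p_ge_3 by (intro DirProd_group group_integer_mod_group group_dihedral_group) auto

lemma mult_N:
  "(\<beta>, (\<alpha>, e)) \<otimes>\<^bsub>N\<^esub> (\<beta>', (\<alpha>', e')) =
     ((\<beta> + \<beta>') mod P, ((\<alpha> + (if e = 0 then \<alpha>' else - \<alpha>')) mod P, (e + e') mod 2))"
  by simp

lemma one_N: "\<one>\<^bsub>N\<^esub> = (0, (0, 0))"
  by simp

lemma dvd_double_imp_0:
  assumes "0 \<le> x" "x < P" "P dvd 2 * x"
  shows "x = 0"
proof -
  have "coprime P 2"
    using odd by (simp add: coprime_commute)
  then have "P dvd x"
    using assms(3) by (simp add: coprime_dvd_mult_right_iff)
  show ?thesis
  proof (rule ccontr)
    assume "x \<noteq> 0"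
    then have "\<bar>P\<bar> \<le> \<bar>x\<bar>"
      using \<open>P dvd x\<close> by (rule dvd_imp_le_int)
    then show False
      using assms(1,2) by linarith
  qed
qed

lemma double_mod_eq_0_imp_0:
  assumes "0 \<le> x" "x < P" "(x + x) mod P = 0"
  shows "x = 0"
proof (rule dvd_double_imp_0[OF assms(1,2)])
  show "P dvd 2 * x"
    unfolding mult_2 using assms(3) by (rule mod_0_imp_dvd)
qed

lemma mod_plus_eq_mod_minus_imp_0:
  assumes "0 \<le> x" "x < P" "(y + x) mod P = (y - x) mod P"
  shows "x = 0"
proof (rule dvd_double_imp_0[OF assms(1,2)])
  have "P dvd (y + x) - (y - x)"
    using assms(3) by (simp only: mod_eq_dvd_iff)
  moreover have "(y + x) - (y - x) = 2 * x"
    by linarith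
  ultimately show "P dvd 2 * x"
    by (simp only:)
qed

lemma involution_N:
  assumes "x \<in> carrier N" "x \<otimes>\<^bsub>N\<^esub> x = \<one>\<^bsub>N\<^esub>" "x \<noteq> \<one>\<^bsub>N\<^esub>"
  obtains t where "x = (0, (t, 1))"
proof -
  obtain \<beta> \<alpha> e where x: "x = (\<beta>, (\<alpha>, e))" "0 \<le> \<beta>" "\<beta> < P" "0 \<le> \<alpha>" "\<alpha> < P" "e = 0 \<or> e = 1"
    using assms(1) by (rule carrier_N_cases)
  have sq: "(\<beta> + \<beta>) mod P = 0" "(\<alpha> + (if e = 0 then \<alpha> else - \<alpha>)) mod P = 0"
    using assms(2) unfolding x(1) mult_N one_N prod.inject by blast+
  have "\<beta> = 0"
    using x(2,3) sq(1) by (rule double_mod_eq_0_imp_0)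
  moreover have "e = 1"
  proof (rule ccontr)
    assume "e \<noteq> 1"
    then have "e = 0" using x(6) by simp
    with sq(2) have "(\<alpha> + \<alpha>) mod P = 0"
      by simp
    then have "\<alpha> = 0"
      by (rule double_mod_eq_0_imp_0[OF x(4,5)])
    with \<open>\<beta> = 0\<close> \<open>e = 0\<close> show False
      using assms(3) x(1) one_N by simp
  qed
  ultimately show ?thesis
    using x(1) that by blast
qed

lemma commuting_with_reflections_N:
  assumes "(\<gamma>, (\<alpha>, e)) \<in> carrier N" "0 < b" "b < P"
    and "(\<gamma>, (\<alpha>, e)) \<otimes>\<^bsub>N\<^esub> (0, (b, 0)) = (0, (b, 0)) \<otimes>\<^bsub>N\<^esub> (\<gamma>, (\<alpha>, e))"
    and "(\<gamma>, (\<alpha>, e)) \<otimes>\<^bsub>N\<^esub> (0, (t, 1)) = (0, (t, 1)) \<otimes>\<^bsub>N\<^esub> (\<gamma>, (\<alpha>, e))"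
  shows "\<alpha> = 0 \<and> e = 0"
proof -
  have e: "e = 0"
  proof (rule ccontr)
    assume "e \<noteq> 0"
    then have "(\<alpha> + b) mod P = (\<alpha> - b) mod P"
      using assms(1,4) by (auto simp: carrier_N add.commute)
    then show False
      using assms(2,3) mod_plus_eq_mod_minus_imp_0[of b \<alpha>] by simp
  qed
  then have "(t + \<alpha>) mod P = (t - \<alpha>) mod P"
    using assms(5) by (simp add: add.commute)
  then show ?thesis
    using assms(1) e mod_plus_eq_mod_minus_imp_0[of \<alpha> t] by (simp add: carrier_N)
qed

text \<open>Writing \<open>(\<beta>, (\<alpha>, e))\<close> for \<open>c\<^sup>\<beta> r\<^sup>\<alpha> s\<^sup>e\<close>, the map \<open>aut a b t\<close> sends
  \<open>c \<mapsto> c\<^sup>a\<close>, \<open>r \<mapsto> r\<^sup>b\<close> and \<open>s \<mapsto> r\<^sup>t s\<close>.\<close>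
definition aut :: "int \<Rightarrow> int \<Rightarrow> int \<Rightarrow> int \<times> int \<times> int \<Rightarrow> int \<times> int \<times> int" where
  "aut a b t = (\<lambda>x \<in> carrier N. ((a * fst x) mod P, ((b * fst (snd x) + t * snd (snd x)) mod P, snd (snd x))))"

lemma aut_apply:
  "(\<beta>, (\<alpha>, e)) \<in> carrier N \<Longrightarrow> aut a b t (\<beta>, (\<alpha>, e)) = ((a * \<beta>) mod P, ((b * \<alpha> + t * e) mod P, e))"
  by (simp add: aut_def)

lemma aut_outside_carrier: "x \<notin> carrier N \<Longrightarrow> aut a b t x = undefined"
  unfolding aut_def by (rule extensional_arb[OF restrict_extensional])

lemma pow_N_rotation:
  assumes "(\<beta>, (\<alpha>, 0)) \<in> carrier N"
  shows "(\<beta>, (\<alpha>, 0)) [^]\<^bsub>N\<^esub> n = ((int n * \<beta>) mod P, ((int n * \<alpha>) mod P, 0))"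
proof (induction n)
  case (Suc n)
  then show ?case
    by (simp add: algebra_simps) (simp add: mod_add_right_eq)
qed simp

lemma N_decompose:
  assumes "(\<beta>, (\<alpha>, e)) \<in> carrier N"
  shows "(\<beta>, (\<alpha>, e)) = (1, (0, 0)) [^]\<^bsub>N\<^esub> nat \<beta> \<otimes>\<^bsub>N\<^esub> ((0, (1, 0)) [^]\<^bsub>N\<^esub> nat \<alpha> \<otimes>\<^bsub>N\<^esub> (0, (0, e)))"
proof -
  have gens: "(1, (0, 0)) \<in> carrier N" "(0, (1, 0)) \<in> carrier N"
    using p_ge_3 by simp_all
  have "(1, (0, 0)) [^]\<^bsub>N\<^esub> nat \<beta> = (\<beta>, (0, 0))" "(0, (1, 0)) [^]\<^bsub>N\<^esub> nat \<alpha> = (0, (\<alpha>, 0))"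
    using assms by (simp_all add: pow_N_rotation[OF gens(1)] pow_N_rotation[OF gens(2)])
  then show ?thesis
    using assms by simp
qed

lemma auto_eq_aut:
  assumes \<psi>: "\<psi> \<in> auto N" and c: "\<psi> (1, (0, 0)) = (a, (0, 0))"
    and r: "\<psi> (0, (1, 0)) = (0, (b, 0))" and s: "\<psi> (0, (0, 1)) = (0, (t, 1))"
  shows "\<psi> = aut a b t"
proof
  fix x
  show "\<psi> x = aut a b t x"
  proof (cases "x \<in> carrier N")
    case False
    then show ?thesis
      using extensional_arb[OF auto_extensional[OF \<psi>] False] aut_outside_carrier[OF False] by (simp only:)
  next
    case True
    then obtain \<beta> \<alpha> e where x: "x = (\<beta>, (\<alpha>, e))" "0 \<le> \<beta>" "\<beta> < P" "0 \<le> \<alpha>" "\<alpha> < P" "e = 0 \<or> e = 1"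
      by (rule carrier_N_cases)
    interpret \<psi>: group_hom N N \<psi> by (rule group_hom_auto[OF group_N \<psi>])
    have gens: "(1, (0, 0)) \<in> carrier N" "(0, (1, 0)) \<in> carrier N" "(0, (0, 1)) \<in> carrier N"
        "(0, (0, e)) \<in> carrier N"
      using p_ge_3 x by auto
    have images: "(a, (0, 0)) \<in> carrier N" "(0, (b, 0)) \<in> carrier N" "(0, (t, 1)) \<in> carrier N"
      using auto_closed[OF \<psi> gens(1)] auto_closed[OF \<psi> gens(2)] auto_closed[OF \<psi> gens(3)] c r s
      by simp_all
    have "\<psi> (0, (0, e)) = (0, ((t * e) mod P, e))"
      using x images(3) s \<psi>.hom_one by auto
    moreover have "\<psi> x = \<psi> ((1, (0, 0)) [^]\<^bsub>N\<^esub> nat \<beta>) \<otimes>\<^bsub>N\<^esub>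
        (\<psi> ((0, (1, 0)) [^]\<^bsub>N\<^esub> nat \<alpha>) \<otimes>\<^bsub>N\<^esub> \<psi> (0, (0, e)))"
      unfolding x(1) N_decompose[OF True[unfolded x(1)]]
      using gens by (simp only: \<psi>.hom_mult \<psi>.G.nat_pow_closed \<psi>.G.m_closed)
    ultimately have "\<psi> x = (a, (0, 0)) [^]\<^bsub>N\<^esub> nat \<beta> \<otimes>\<^bsub>N\<^esub> ((0, (b, 0)) [^]\<^bsub>N\<^esub> nat \<alpha> \<otimes>\<^bsub>N\<^esub> (0, ((t * e) mod P, e)))"
      using gens by (simp only: \<psi>.hom_nat_pow c r)
    then show ?thesis
      using x True by (simp add: pow_N_rotation[OF images(1)] pow_N_rotation[OF images(2)] aut_apply
          mod_add_left_eq mod_add_right_eq algebra_simps)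
  qed
qed

lemma auto_image_s:
  assumes \<psi>: "\<psi> \<in> auto N"
  obtains t where "\<psi> (0, (0, 1)) = (0, (t, 1))"
proof -
  have s: "(0, (0, 1)) \<in> carrier N" "(0, (0, 1)) \<otimes>\<^bsub>N\<^esub> (0, (0, 1)) = \<one>\<^bsub>N\<^esub>" "(0::int, (0::int, 1::int)) \<noteq> \<one>\<^bsub>N\<^esub>"
    using p_ge_3 by (simp_all add: mult_N one_N)
  show ?thesis
    using involution_N[OF auto_closed[OF \<psi> s(1)] auto_involution[OF group_N \<psi> s]] that by blast
qed

lemma auto_image_r:
  assumes \<psi>: "\<psi> \<in> auto N" and s: "\<psi> (0, (0, 1)) = (0, (t, 1))"
  obtains b where "\<psi> (0, (1, 0)) = (0, (b, 0))" "0 < b" "b < P"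
proof -
  have gens: "(0, (1, 0)) \<in> carrier N" "(0, (0, 1)) \<in> carrier N"
    using p_ge_3 by simp_all
  obtain \<gamma> b e where r: "\<psi> (0, (1, 0)) = (\<gamma>, (b, e))" "0 \<le> \<gamma>" "\<gamma> < P" "0 \<le> b" "b < P" "e = 0 \<or> e = 1"
    using auto_closed[OF \<psi> gens(1)] by (rule carrier_N_cases)
  \<comment> \<open>\<open>s r\<close> is a reflection, so its image \<open>\<psi> s \<psi> r\<close> is one too\<close>
  define sr where "sr = (0::int, ((- 1) mod P, 1::int))"
  have sr: "sr \<in> carrier N" "sr = (0, (0, 1)) \<otimes>\<^bsub>N\<^esub> (0, (1, 0))" "sr \<otimes>\<^bsub>N\<^esub> sr = \<one>\<^bsub>N\<^esub>" "sr \<noteq> \<one>\<^bsub>N\<^esub>"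
    using p_ge_3 by (auto simp: sr_def mod_add_left_eq mod_add_right_eq)
  obtain u where "\<psi> sr = (0, (u, 1))"
    using involution_N[OF auto_closed[OF \<psi> sr(1)] auto_involution[OF group_N \<psi> sr(1,3,4)]] by blast
  moreover have "\<psi> sr = \<psi> (0, (0, 1)) \<otimes>\<^bsub>N\<^esub> \<psi> (0, (1, 0))"
    unfolding sr(2) using gens(2,1) by (rule auto_mult[OF \<psi>])
  ultimately have "\<gamma> = 0" "e = 0"
    using r s by auto
  with r have r': "\<psi> (0, (1, 0)) = (0, (b, 0))" by simp
  moreover have "b \<noteq> 0"
    using r' auto_eq_one_iff[OF group_N \<psi> gens(1)] by auto
  ultimately show ?thesis
    using that r(4,5) by simp
qed

lemma auto_N_eq_aut:
  assumes \<psi>: "\<psi> \<in> auto N"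
  obtains a b t where "\<psi> = aut a b t" "0 \<le> a" "a < P" "0 \<le> b" "b < P"
proof -
  have gens: "(1, (0, 0)) \<in> carrier N" "(0, (1, 0)) \<in> carrier N" "(0, (0, 1)) \<in> carrier N"
    using p_ge_3 by auto
  obtain t where s: "\<psi> (0, (0, 1)) = (0, (t, 1))"
    using auto_image_s[OF \<psi>] .
  obtain b where r: "\<psi> (0, (1, 0)) = (0, (b, 0))" "0 < b" "b < P"
    using auto_image_r[OF \<psi> s] .
  obtain a \<alpha> e where c: "\<psi> (1, (0, 0)) = (a, (\<alpha>, e))" "0 \<le> a" "a < P"
    using auto_closed[OF \<psi> gens(1)] by (rule carrier_N_cases)
  \<comment> \<open>\<open>c\<close> is central, so \<open>\<psi> c\<close> commutes with the reflection \<open>\<psi> s\<close> and the rotation \<open>\<psi> r\<close>\<close>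
  have "\<alpha> = 0 \<and> e = 0"
  proof (rule commuting_with_reflections_N)
    show "(a, (\<alpha>, e)) \<in> carrier N"
      using auto_closed[OF \<psi> gens(1)] c by simp
    show "(a, (\<alpha>, e)) \<otimes>\<^bsub>N\<^esub> (0, (b, 0)) = (0, (b, 0)) \<otimes>\<^bsub>N\<^esub> (a, (\<alpha>, e))"
      using auto_mult[OF \<psi> gens(1,2)] auto_mult[OF \<psi> gens(2,1)] c r by simp
    show "(a, (\<alpha>, e)) \<otimes>\<^bsub>N\<^esub> (0, (t, 1)) = (0, (t, 1)) \<otimes>\<^bsub>N\<^esub> (a, (\<alpha>, e))"
      using auto_mult[OF \<psi> gens(1,3)] auto_mult[OF \<psi> gens(3,1)] c s by simp
  qed (use r in auto)
  then have "\<psi> = aut a b t"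
    using auto_eq_aut[OF \<psi> _ r(1) s] c by simp
  then show ?thesis
    using that c r by simp
qed

subsection \<open>Elements of the holomorph of order dividing \<open>p\<^sup>2\<close>\<close>

abbreviation "Hol \<equiv> holomorph N"

lemma group_Hol: "group Hol"
  by (rule group_holomorph[OF group_N])

lemma compose_aut: "compose (carrier N) (aut a b t) (aut a' b' t') = aut (a * a') (b * b') (b * t' + t)"
proof
  fix x
  show "compose (carrier N) (aut a b t) (aut a' b' t') x = aut (a * a') (b * b') (b * t' + t) x"
  proof (cases "x \<in> carrier N")
    case True
    then obtain \<beta> \<alpha> e where x: "x = (\<beta>, (\<alpha>, e))" "0 \<le> \<beta>" "\<beta> < P" "0 \<le> \<alpha>" "\<alpha> < P" "e = 0 \<or> e = 1"
      by (rule carrier_N_cases)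
    have x': "(\<beta>, (\<alpha>, e)) \<in> carrier N"
      using True x(1) by simp
    have "compose (carrier N) (aut a b t) (aut a' b' t') x = aut a b t (aut a' b' t' x)"
      using True by (rule compose_eq)
    also have "aut a' b' t' x = ((a' * \<beta>) mod P, ((b' * \<alpha> + t' * e) mod P, e))"
      unfolding x(1) using x' by (rule aut_apply)
    also have "aut a b t \<dots> = ((a * ((a' * \<beta>) mod P)) mod P, ((b * ((b' * \<alpha> + t' * e) mod P) + t * e) mod P, e))"
      by (rule aut_apply) (use x p_ge_3 in auto)
    also have "\<dots> = aut (a * a') (b * b') (b * t' + t) x"
      unfolding x(1) aut_apply[OF x'] mod_mult_right_eq mod_add_left_eq[of "b * _", symmetric]
      by (simp add: algebra_simps) (simp add: mod_add_right_eq)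
    finally show ?thesis .
  next
    case False
    then show ?thesis
      by (simp add: aut_outside_carrier extensional_arb[OF compose_extensional])
  qed
qed

lemma aut_1_1_0: "aut 1 1 0 = (\<lambda>x \<in> carrier N. x)"
  by (rule ext) (auto simp: aut_def)

lemma mult_Hol_aut:
  "(x, aut a b t) \<otimes>\<^bsub>Hol\<^esub> (y, aut a' b' t') = (x \<otimes>\<^bsub>N\<^esub> aut a b t y, aut (a * a') (b * b') (b * t' + t))"
  by (simp only: mult_holomorph compose_aut)

lemma one_Hol: "\<one>\<^bsub>Hol\<^esub> = ((0, (0, 0)), aut 1 1 0)"
  by (simp only: one_holomorph aut_1_1_0 one_N)

lemma mult_AutoGroup_aut:
  "aut a b t \<in> auto N \<Longrightarrow> aut a' b' t' \<in> auto N \<Longrightarrow>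
    aut a b t \<otimes>\<^bsub>AutoGroup N\<^esub> aut a' b' t' = aut (a * a') (b * b') (b * t' + t)"
  by (simp only: mult_AutoGroup compose_aut)

lemma one_AutoGroup_aut: "\<one>\<^bsub>AutoGroup N\<^esub> = aut 1 1 0"
  by (simp only: one_AutoGroup aut_1_1_0)

lemma aut_s: "aut a b t (0, (0, 1)) = (0, (t mod P, 1))"
  using p_ge_3 by (simp add: aut_apply)

lemma aut_mod: "aut a b (t mod P) = aut a b t"
  unfolding aut_def by (rule restrict_ext) (metis mod_add_right_eq mod_mult_left_eq)

lemma aut_1_1_eq_iff: "aut 1 1 t = aut 1 1 t' \<longleftrightarrow> t mod P = t' mod P"
proof
  assume "aut 1 1 t = aut 1 1 t'"
  then show "t mod P = t' mod P"
    using aut_s[of 1 1 t] aut_s[of 1 1 t'] by simp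
next
  assume "t mod P = t' mod P"
  then show "aut 1 1 t = aut 1 1 t'"
    by (metis aut_mod)
qed

lemma pow_aut:
  assumes "aut a b t \<in> auto N"
  obtains T where "aut a b t [^]\<^bsub>AutoGroup N\<^esub> n = aut (a ^ n) (b ^ n) T"
proof -
  interpret Aut: group "AutoGroup N" by (rule group.AutoGroup[OF group_N])
  have "\<exists>T. aut a b t [^]\<^bsub>AutoGroup N\<^esub> n = aut (a ^ n) (b ^ n) T"
  proof (induction n)
    case 0
    show ?case
      by (rule exI[of _ 0]) (simp add: one_AutoGroup_aut)
  next
    case (Suc n)
    then obtain T where T: "aut a b t [^]\<^bsub>AutoGroup N\<^esub> n = aut (a ^ n) (b ^ n) T" by blast
    have closed: "aut (a ^ n) (b ^ n) T \<in> auto N"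
      using Aut.nat_pow_closed[of "aut a b t" n] assms unfolding T by simp
    have "aut a b t [^]\<^bsub>AutoGroup N\<^esub> Suc n = aut (a ^ n) (b ^ n) T \<otimes>\<^bsub>AutoGroup N\<^esub> aut a b t"
      by (simp only: Aut.nat_pow_Suc T)
    also have "\<dots> = aut (a ^ Suc n) (b ^ Suc n) (b ^ n * t + T)"
      using closed assms by (simp only: mult_AutoGroup_aut power_Suc2)
    finally show ?case by blast
  qed
  then show ?thesis using that by blast
qed

lemma snd_pow_Hol: "h \<in> carrier Hol \<Longrightarrow> snd (h [^]\<^bsub>Hol\<^esub> (n::nat)) = snd h [^]\<^bsub>AutoGroup N\<^esub> n"
  by (rule hom_nat_pow[OF snd_hom_holomorph _ group_Hol group.AutoGroup[OF group_N]])

lemma snd_eq_aut_1_1_of_pow_eq_1: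
  assumes h: "h \<in> carrier Hol" and pow: "h [^]\<^bsub>Hol\<^esub> (p * p) = \<one>\<^bsub>Hol\<^esub>"
  obtains t where "snd h = aut 1 1 t"
proof -
  have "snd h \<in> auto N" using h by auto
  then obtain a b t where abt: "snd h = aut a b t" "0 \<le> a" "a < P" "0 \<le> b" "b < P"
    by (rule auto_N_eq_aut)
  obtain T where T: "snd h [^]\<^bsub>AutoGroup N\<^esub> (p * p) = aut (a ^ (p * p)) (b ^ (p * p)) T"
    using pow_aut \<open>snd h \<in> auto N\<close> unfolding abt(1) by blast
  have "aut (a ^ (p * p)) (b ^ (p * p)) T = snd (h [^]\<^bsub>Hol\<^esub> (p * p))"
    using snd_pow_Hol[OF h] T by simp
  also have "\<dots> = aut 1 1 0"
    using pow by (simp add: one_Hol)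
  finally have id: "aut (a ^ (p * p)) (b ^ (p * p)) T = aut 1 1 0" .
  have "(1, (0, 0)) \<in> carrier N" "(0, (1, 0)) \<in> carrier N"
    using p_ge_3 by simp_all
  then have "a ^ (p * p) mod P = 1" "b ^ (p * p) mod P = 1"
    using fun_cong[OF id, of "(1, (0, 0))"] fun_cong[OF id, of "(0, (1, 0))"] p_ge_3
    by (simp_all add: aut_apply)
  then have "a = 1" "b = 1"
    using power_prime_square_mod_eq_1[OF prime abt(2,3)] power_prime_square_mod_eq_1[OF prime abt(4,5)]
    by blast+
  then show ?thesis
    using that abt(1) by blast
qed

definition reflection_exponent :: "(int \<times> int \<times> int) \<times> (int \<times> int \<times> int \<Rightarrow> int \<times> int \<times> int) \<Rightarrow> int" where
  "reflection_exponent h = snd (snd (fst h))"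

lemma reflection_exponent_hom: "reflection_exponent \<in> hom Hol (integer_mod_group 2)"
proof (rule homI)
  fix h assume "h \<in> carrier Hol"
  then show "reflection_exponent h \<in> carrier (integer_mod_group 2)"
    by (auto simp: reflection_exponent_def carrier_integer_mod_group)
next
  fix h h' assume "h \<in> carrier Hol" "h' \<in> carrier Hol"
  then obtain x \<psi> y \<psi>' where h: "h = (x, \<psi>)" "h' = (y, \<psi>')" "x \<in> carrier N" "y \<in> carrier N" "\<psi> \<in> auto N"
    by (cases h; cases h') auto
  then obtain a b t where "\<psi> = aut a b t"
    by (metis auto_N_eq_aut)
  moreover obtain \<beta> \<alpha> e where "y = (\<beta>, (\<alpha>, e))" "0 \<le> \<beta>" "\<beta> < P" "0 \<le> \<alpha>" "\<alpha> < P" "e = 0 \<or> e = 1"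
    using h(4) by (rule carrier_N_cases)
  ultimately show "reflection_exponent (h \<otimes>\<^bsub>Hol\<^esub> h') =
      reflection_exponent h \<otimes>\<^bsub>integer_mod_group 2\<^esub> reflection_exponent h'"
    using h by (cases x) (simp add: mult_holomorph reflection_exponent_def aut_apply)
qed

lemma reflection_exponent_eq_0_of_pow_eq_1:
  assumes h: "h \<in> carrier Hol" and pow: "h [^]\<^bsub>Hol\<^esub> (p * p) = \<one>\<^bsub>Hol\<^esub>"
  shows "reflection_exponent h = 0"
proof -
  have e: "reflection_exponent h \<in> {0, 1}"
    using h by (auto simp: reflection_exponent_def)
  have "reflection_exponent (h [^]\<^bsub>Hol\<^esub> (p * p)) = (int (p * p) * reflection_exponent h) mod 2"
    using hom_nat_pow[OF reflection_exponent_hom h group_Hol group_integer_mod_group] by simp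
  then have "(int (p * p) * reflection_exponent h) mod 2 = 0"
    using pow by (simp add: reflection_exponent_def one_Hol)
  then show ?thesis
    using e odd by auto
qed

end

section \<open>The subgroups \<open>A\<^sub>k\<^sub>,\<^sub>l\<close>\<close>

locale cyclic_dihedral_shear = cyclic_dihedral +
  fixes \<phi> :: "int \<times> int \<times> int \<Rightarrow> int \<times> int \<times> int"
  assumes phi_auto: "\<phi> \<in> auto N"
    and phi_c: "\<phi> (1, (0, 0)) = (1, (0, 0))" and phi_r: "\<phi> (0, (1, 0)) = (0, (1, 0))"
    and phi_s: "\<phi> (0, (0, 1)) = (0, (1, 0)) \<otimes>\<^bsub>N\<^esub> (0, (0, 1))"
begin

lemma phi_eq_aut: "\<phi> = aut 1 1 1"
  using auto_eq_aut[OF phi_auto phi_c phi_r] phi_s p_ge_3 by simp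

lemma pow_phi: "\<phi> [^]\<^bsub>AutoGroup N\<^esub> (k::nat) = aut 1 1 (int k)"
proof (induction k)
  case 0
  then show ?case by (simp add: one_AutoGroup_aut)
next
  case (Suc k)
  have "\<phi> [^]\<^bsub>AutoGroup N\<^esub> k \<in> auto N"
    using monoid.nat_pow_closed[OF group.is_monoid[OF group.AutoGroup[OF group_N]]] phi_auto by simp
  then have "\<phi> [^]\<^bsub>AutoGroup N\<^esub> Suc k = aut 1 1 (int k) \<otimes>\<^bsub>AutoGroup N\<^esub> aut 1 1 1"
    by (simp add: Suc flip: phi_eq_aut)
  also have "\<dots> = aut 1 1 (int (Suc k))"
    using \<open>\<phi> [^]\<^bsub>AutoGroup N\<^esub> k \<in> auto N\<close> phi_auto[unfolded phi_eq_aut]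
    by (simp add: Suc mult_AutoGroup_aut)
  finally show ?case .
qed

lemma aut_1_1_in_auto: "aut 1 1 t \<in> auto N"
proof -
  have "aut 1 1 t = aut 1 1 (int (nat (t mod P)))"
    using p_ge_3 by (simp add: aut_1_1_eq_iff)
  also have "\<dots> = \<phi> [^]\<^bsub>AutoGroup N\<^esub> nat (t mod P)"
    by (simp add: pow_phi)
  also have "\<dots> \<in> auto N"
    using monoid.nat_pow_closed[OF group.is_monoid[OF group.AutoGroup[OF group_N]]] phi_auto by simp
  finally show ?thesis .
qed

text \<open>\<open>hol_elem \<beta> \<alpha> m\<close> is \<open>(c\<^sup>\<beta> r\<^sup>\<alpha>, \<phi>\<^sup>m)\<close>.\<close>
definition hol_elem :: "int \<Rightarrow> int \<Rightarrow> int \<Rightarrow> (int \<times> int \<times> int) \<times> (int \<times> int \<times> int \<Rightarrow> int \<times> int \<times> int)" where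
  "hol_elem \<beta> \<alpha> m = ((\<beta> mod P, (\<alpha> mod P, 0)), aut 1 1 m)"

lemma hol_elem_carrier: "hol_elem \<beta> \<alpha> m \<in> carrier Hol"
  using aut_1_1_in_auto p_ge_3 by (simp add: hol_elem_def)

lemma mult_hol_elem: "hol_elem \<beta> \<alpha> m \<otimes>\<^bsub>Hol\<^esub> hol_elem \<beta>' \<alpha>' m' = hol_elem (\<beta> + \<beta>') (\<alpha> + \<alpha>') (m + m')"
  using p_ge_3 by (simp add: hol_elem_def mult_Hol_aut aut_apply mod_add_eq add.commute)

lemma one_Hol_eq_hol_elem: "\<one>\<^bsub>Hol\<^esub> = hol_elem 0 0 0"
  by (simp add: hol_elem_def one_Hol)

lemma hol_elem_eq_iff:
  "hol_elem \<beta> \<alpha> m = hol_elem \<beta>' \<alpha>' m' \<longleftrightarrow> \<beta> mod P = \<beta>' mod P \<and> \<alpha> mod P = \<alpha>' mod P \<and> m mod P = m' mod P"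
  by (auto simp: hol_elem_def aut_1_1_eq_iff)

lemma inv_hol_elem: "inv\<^bsub>Hol\<^esub> (hol_elem \<beta> \<alpha> m) = hol_elem (- \<beta>) (- \<alpha>) (- m)"
  by (rule group.inv_equality[OF group_Hol _ hol_elem_carrier hol_elem_carrier])
    (simp add: mult_hol_elem one_Hol_eq_hol_elem)

lemma hol_act_hol_elem:
  assumes "(\<gamma>, (\<delta>, e)) \<in> carrier N"
  shows "hol_act N (hol_elem \<beta> \<alpha> m) (\<gamma>, (\<delta>, e)) = ((\<beta> + \<gamma>) mod P, ((\<alpha> + \<delta> + m * e) mod P, e))"
  using assms by (simp add: hol_act_def hol_elem_def aut_apply mod_add_left_eq mod_add_right_eq add.assoc)

lemma hol_elem_of_pow_eq_1:
  assumes h: "h \<in> carrier Hol" and pow: "h [^]\<^bsub>Hol\<^esub> (p * p) = \<one>\<^bsub>Hol\<^esub>"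
  obtains \<beta> \<alpha> m where "h = hol_elem \<beta> \<alpha> m" "0 \<le> \<beta>" "\<beta> < P" "0 \<le> \<alpha>" "\<alpha> < P"
proof -
  obtain m where m: "snd h = aut 1 1 m"
    using snd_eq_aut_1_1_of_pow_eq_1[OF h pow] .
  obtain \<beta> \<alpha> e where x: "fst h = (\<beta>, (\<alpha>, e))" "0 \<le> \<beta>" "\<beta> < P" "0 \<le> \<alpha>" "\<alpha> < P"
    using h by (cases h) (auto elim: carrier_N_cases)
  moreover have "e = 0"
    using reflection_exponent_eq_0_of_pow_eq_1[OF h pow] x by (simp add: reflection_exponent_def)
  ultimately have "h = hol_elem \<beta> \<alpha> m"
    using m by (cases h) (simp add: hol_elem_def)
  then show ?thesis
    using that x by blast
qed

definition A_set :: "int \<Rightarrow> int \<Rightarrow> ((int \<times> int \<times> int) \<times> (int \<times> int \<times> int \<Rightarrow> int \<times> int \<times> int)) set" where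
  "A_set k l = {hol_elem \<beta> \<alpha> (k * \<alpha> + l * \<beta>) | \<beta> \<alpha>. True}"

lemma subgroup_A_set: "subgroup (A_set k l) Hol"
proof (rule group.subgroupI[OF group_Hol])
  show "A_set k l \<subseteq> carrier Hol"
    using hol_elem_carrier unfolding A_set_def by blast
  show "A_set k l \<noteq> {}"
    unfolding A_set_def by blast
next
  fix h assume "h \<in> A_set k l"
  then obtain \<beta> \<alpha> where "h = hol_elem \<beta> \<alpha> (k * \<alpha> + l * \<beta>)"
    unfolding A_set_def by blast
  then have "inv\<^bsub>Hol\<^esub> h = hol_elem (- \<beta>) (- \<alpha>) (k * (- \<alpha>) + l * (- \<beta>))"
    by (simp add: inv_hol_elem)
  then show "inv\<^bsub>Hol\<^esub> h \<in> A_set k l"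
    unfolding A_set_def by blast
next
  fix h h' assume "h \<in> A_set k l" "h' \<in> A_set k l"
  then obtain \<beta> \<alpha> \<beta>' \<alpha>' where "h = hol_elem \<beta> \<alpha> (k * \<alpha> + l * \<beta>)" "h' = hol_elem \<beta>' \<alpha>' (k * \<alpha>' + l * \<beta>')"
    unfolding A_set_def by blast
  then have "h \<otimes>\<^bsub>Hol\<^esub> h' = hol_elem (\<beta> + \<beta>') (\<alpha> + \<alpha>') (k * (\<alpha> + \<alpha>') + l * (\<beta> + \<beta>'))"
    by (simp add: mult_hol_elem algebra_simps)
  then show "h \<otimes>\<^bsub>Hol\<^esub> h' \<in> A_set k l"
    unfolding A_set_def by blast
qed

lemma mod_linear_cong:
  "\<beta> mod P = \<beta>' mod P \<Longrightarrow> \<alpha> mod P = \<alpha>' mod P \<Longrightarrow> (k * \<alpha> + l * \<beta>) mod P = (k * \<alpha>' + l * \<beta>') mod P"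
  by (intro mod_add_cong mod_mult_cong refl)

lemma hol_elem_in_A_set_iff: "hol_elem \<beta> \<alpha> m \<in> A_set k l \<longleftrightarrow> m mod P = (k * \<alpha> + l * \<beta>) mod P"
proof
  assume "hol_elem \<beta> \<alpha> m \<in> A_set k l"
  then obtain \<beta>' \<alpha>' where "hol_elem \<beta> \<alpha> m = hol_elem \<beta>' \<alpha>' (k * \<alpha>' + l * \<beta>')"
    unfolding A_set_def by blast
  then show "m mod P = (k * \<alpha> + l * \<beta>) mod P"
    using mod_linear_cong[of \<beta> \<beta>' \<alpha> \<alpha>' k l] by (simp add: hol_elem_eq_iff)
next
  assume "m mod P = (k * \<alpha> + l * \<beta>) mod P"
  then have "hol_elem \<beta> \<alpha> m = hol_elem \<beta> \<alpha> (k * \<alpha> + l * \<beta>)"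
    by (simp add: hol_elem_eq_iff)
  then show "hol_elem \<beta> \<alpha> m \<in> A_set k l"
    unfolding A_set_def by blast
qed

lemma A_set_elem_mod:
  "hol_elem \<beta> \<alpha> (k * \<alpha> + l * \<beta>) = hol_elem (\<beta> mod P) (\<alpha> mod P) (k * (\<alpha> mod P) + l * (\<beta> mod P))"
  using mod_linear_cong[of \<beta> "\<beta> mod P" \<alpha> "\<alpha> mod P" k l] by (simp add: hol_elem_eq_iff)

lemma generate_hol_elem_eq_A_set: "generate Hol {hol_elem 0 1 k, hol_elem 1 0 l} = A_set k l"
proof
  show "generate Hol {hol_elem 0 1 k, hol_elem 1 0 l} \<subseteq> A_set k l"
    by (intro group.generate_subgroup_incl[OF group_Hol] subgroup_A_set) (simp add: hol_elem_in_A_set_iff)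
next
  let ?g = "generate Hol {hol_elem 0 1 k, hol_elem 1 0 l}"
  have gens: "hol_elem 0 1 k \<in> ?g" "hol_elem 1 0 l \<in> ?g"
    by (simp_all add: generate.incl)
  have r: "hol_elem 0 (int a) (k * int a) \<in> ?g" for a :: nat
  proof (induction a)
    case 0
    then show ?case using generate.one[of Hol] by (simp add: one_Hol_eq_hol_elem)
  next
    case (Suc a)
    have "hol_elem 0 1 k \<otimes>\<^bsub>Hol\<^esub> hol_elem 0 (int a) (k * int a) \<in> ?g"
      by (rule generate.eng[OF gens(1) Suc])
    then show ?case by (simp add: mult_hol_elem algebra_simps)
  qed
  have cr: "hol_elem (int b) (int a) (k * int a + l * int b) \<in> ?g" for a b :: nat
  proof (induction b)
    case 0
    then show ?case using r by simp
  next
    case (Suc b)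
    have "hol_elem 1 0 l \<otimes>\<^bsub>Hol\<^esub> hol_elem (int b) (int a) (k * int a + l * int b) \<in> ?g"
      by (rule generate.eng[OF gens(2) Suc])
    then show ?case by (simp add: mult_hol_elem algebra_simps)
  qed
  show "A_set k l \<subseteq> ?g"
  proof
    fix h assume "h \<in> A_set k l"
    then obtain \<beta> \<alpha> where h: "h = hol_elem \<beta> \<alpha> (k * \<alpha> + l * \<beta>)"
      unfolding A_set_def by blast
    have "h = hol_elem (int (nat (\<beta> mod P))) (int (nat (\<alpha> mod P)))
        (k * int (nat (\<alpha> mod P)) + l * int (nat (\<beta> mod P)))"
      using h A_set_elem_mod[of \<beta> \<alpha> k l] p_ge_3 by simp
    then show "h \<in> ?g"
      using cr[of "nat (\<beta> mod P)" "nat (\<alpha> mod P)"] by (simp only:)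
  qed
qed

definition hol_coords :: "(int \<times> int \<times> int) \<times> (int \<times> int \<times> int \<Rightarrow> int \<times> int \<times> int) \<Rightarrow> int \<times> int" where
  "hol_coords h = (fst (fst h), fst (snd (fst h)))"

lemma hol_coords_hol_elem [simp]: "hol_coords (hol_elem \<beta> \<alpha> m) = (\<beta> mod P, \<alpha> mod P)"
  by (simp add: hol_coords_def hol_elem_def)

lemma card_residue_square: "card ({0..<P} \<times> {0..<P}) = p * p"
  by (simp add: card_cartesian_product)

lemma bij_betw_hol_coords_A_set: "bij_betw hol_coords (A_set k l) ({0..<P} \<times> {0..<P})"
proof (rule bij_betw_byWitness[where f' = "\<lambda>(\<beta>, \<alpha>). hol_elem \<beta> \<alpha> (k * \<alpha> + l * \<beta>)"])
  show "\<forall>h \<in> A_set k l. (\<lambda>(\<beta>, \<alpha>). hol_elem \<beta> \<alpha> (k * \<alpha> + l * \<beta>)) (hol_coords h) = h"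
  proof
    fix h assume "h \<in> A_set k l"
    then obtain \<beta> \<alpha> where h: "h = hol_elem \<beta> \<alpha> (k * \<alpha> + l * \<beta>)"
      unfolding A_set_def by blast
    show "(\<lambda>(\<beta>, \<alpha>). hol_elem \<beta> \<alpha> (k * \<alpha> + l * \<beta>)) (hol_coords h) = h"
      using A_set_elem_mod[of \<beta> \<alpha> k l] by (simp add: h)
  qed
  show "\<forall>z \<in> {0..<P} \<times> {0..<P}. hol_coords ((\<lambda>(\<beta>, \<alpha>). hol_elem \<beta> \<alpha> (k * \<alpha> + l * \<beta>)) z) = z"
    by auto
  show "hol_coords ` A_set k l \<subseteq> {0..<P} \<times> {0..<P}"
    using p_ge_3 unfolding A_set_def by auto
  show "(\<lambda>(\<beta>, \<alpha>). hol_elem \<beta> \<alpha> (k * \<alpha> + l * \<beta>)) ` ({0..<P} \<times> {0..<P}) \<subseteq> A_set k l"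
    unfolding A_set_def by auto
qed

lemma card_A_set: "card (A_set k l) = p * p"
  using bij_betw_same_card[OF bij_betw_hol_coords_A_set] card_residue_square by simp

lemma A_set_iso_Zp_Zp: "Hol\<lparr>carrier := A_set k l\<rparr> \<cong> integer_mod_group p \<times>\<times> integer_mod_group p"
proof (rule is_isoI, unfold iso_def, intro CollectI conjI)
  show "hol_coords \<in> hom (Hol\<lparr>carrier := A_set k l\<rparr>) (integer_mod_group p \<times>\<times> integer_mod_group p)"
  proof (rule homI)
    fix h assume "h \<in> carrier (Hol\<lparr>carrier := A_set k l\<rparr>)"
    then show "hol_coords h \<in> carrier (integer_mod_group p \<times>\<times> integer_mod_group p)"
      using bij_betw_apply[OF bij_betw_hol_coords_A_set] by simp
  next
    fix h h' assume "h \<in> carrier (Hol\<lparr>carrier := A_set k l\<rparr>)" "h' \<in> carrier (Hol\<lparr>carrier := A_set k l\<rparr>)"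
    then have "h \<in> A_set k l" "h' \<in> A_set k l"
      by simp_all
    then obtain \<beta> \<alpha> \<beta>' \<alpha>' where "h = hol_elem \<beta> \<alpha> (k * \<alpha> + l * \<beta>)" "h' = hol_elem \<beta>' \<alpha>' (k * \<alpha>' + l * \<beta>')"
      unfolding A_set_def by blast
    then show "hol_coords (h \<otimes>\<^bsub>Hol\<lparr>carrier := A_set k l\<rparr>\<^esub> h') =
        hol_coords h \<otimes>\<^bsub>integer_mod_group p \<times>\<times> integer_mod_group p\<^esub> hol_coords h'"
      by (simp add: mult_hol_elem mod_add_eq)
  qed
  show "bij_betw hol_coords (carrier (Hol\<lparr>carrier := A_set k l\<rparr>)) (carrier (integer_mod_group p \<times>\<times> integer_mod_group p))"
    using bij_betw_hol_coords_A_set by simp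
qed

lemma not_dvd_1_plus:
  assumes "k mod P \<noteq> P - 1"
  shows "\<not> P dvd 1 + k"
proof
  assume "P dvd 1 + k"
  then have "(1 + k mod P) mod P = 0"
    by (simp add: mod_add_right_eq dvd_eq_mod_eq_0)
  moreover have "0 \<le> k mod P" "k mod P < P - 1"
    using assms p_ge_3 pos_mod_bound[of P k] by auto
  ultimately show False
    by (simp add: mod_pos_pos_trivial)
qed

lemma semiregular_A_set:
  assumes k: "k mod P \<noteq> P - 1"
  shows "semiregular N (A_set k l)"
  unfolding semiregular_def
proof (intro ballI impI)
  fix x h assume x: "x \<in> carrier N" and "h \<in> A_set k l" and stab: "hol_act N h x = x"
  then obtain \<beta> \<alpha> where h: "h = hol_elem \<beta> \<alpha> (k * \<alpha> + l * \<beta>)"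
    unfolding A_set_def by blast
  obtain \<gamma> \<delta> e where x': "x = (\<gamma>, (\<delta>, e))" "0 \<le> \<gamma>" "\<gamma> < P" "0 \<le> \<delta>" "\<delta> < P" "e = 0 \<or> e = 1"
    using x by (rule carrier_N_cases)
  have "(\<beta> + \<gamma>) mod P = \<gamma> mod P" "(\<alpha> + \<delta> + (k * \<alpha> + l * \<beta>) * e) mod P = \<delta> mod P"
    using stab x x' by (simp_all add: h hol_act_hol_elem)
  then have \<beta>: "P dvd \<beta>" and \<alpha>: "P dvd \<alpha> + (k * \<alpha> + l * \<beta>) * e"
    by (simp_all add: mod_eq_dvd_iff algebra_simps)
  have "P dvd \<alpha>"
  proof (cases "e = 0")
    case False
    with x' have "e = 1" by simp
    then have "P dvd (1 + k) * \<alpha> + l * \<beta>"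
      using \<alpha> by (simp add: algebra_simps)
    then have "P dvd (1 + k) * \<alpha>"
      using \<beta> by (simp add: dvd_add_left_iff)
    moreover have "\<not> P dvd 1 + k"
      using k by (rule not_dvd_1_plus)
    ultimately show ?thesis
      using prime_dvd_mult_iff[OF prime_P] by blast
  qed (use \<alpha> in simp)
  moreover from this \<beta> have "P dvd k * \<alpha> + l * \<beta>"
    by simp
  ultimately show "h = \<one>\<^bsub>Hol\<^esub>"
    using \<beta> by (simp add: h one_Hol_eq_hol_elem hol_elem_eq_iff dvd_eq_mod_eq_0)
qed

subsection \<open>Semiregular subgroups of order \<open>p\<^sup>2\<close>\<close>

lemma elem_of_subgroup_of_order_p2:
  assumes "subgroup H Hol" "card H = p * p" "h \<in> H"
  obtains \<beta> \<alpha> m where "h = hol_elem \<beta> \<alpha> m" "0 \<le> \<beta>" "\<beta> < P" "0 \<le> \<alpha>" "\<alpha> < P"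
proof -
  have "h \<in> carrier Hol"
    using subgroup.subset[OF assms(1)] assms(3) by blast
  moreover have "h [^]\<^bsub>Hol\<^esub> (p * p) = \<one>\<^bsub>Hol\<^esub>"
    using pow_card_subgroup_eq_1[OF group_Hol assms(1,3)] assms(2) by simp
  ultimately show ?thesis
    using hol_elem_of_pow_eq_1 that by blast
qed

lemma semiregular_hol_elem_eq_one:
  assumes "semiregular N H" "hol_elem \<beta> \<alpha> m \<in> H" "x \<in> carrier N" "hol_act N (hol_elem \<beta> \<alpha> m) x = x"
  shows "\<beta> mod P = 0 \<and> \<alpha> mod P = 0 \<and> m mod P = 0"
proof -
  have "hol_elem \<beta> \<alpha> m = hol_elem 0 0 0"
    using assms unfolding semiregular_def one_Hol_eq_hol_elem by blast
  then show ?thesis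
    by (simp add: hol_elem_eq_iff)
qed

lemma inj_on_hol_coords:
  assumes H: "subgroup H Hol" "semiregular N H" "card H = p * p"
  shows "inj_on hol_coords H"
proof
  fix h h' assume h: "h \<in> H" and h': "h' \<in> H" and eq: "hol_coords h = hol_coords h'"
  obtain \<beta> \<alpha> m where h_eq: "h = hol_elem \<beta> \<alpha> m" "0 \<le> \<beta>" "\<beta> < P" "0 \<le> \<alpha>" "\<alpha> < P"
    using elem_of_subgroup_of_order_p2[OF H(1,3) h] .
  obtain \<beta>' \<alpha>' m' where h'_eq: "h' = hol_elem \<beta>' \<alpha>' m'" "0 \<le> \<beta>'" "\<beta>' < P" "0 \<le> \<alpha>'" "\<alpha>' < P"
    using elem_of_subgroup_of_order_p2[OF H(1,3) h'] .
  have "\<beta> = \<beta>'" "\<alpha> = \<alpha>'"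
    using eq h_eq h'_eq by simp_all
  \<comment> \<open>\<open>h h'\<inverse>\<close> lies in the kernel of the action on the identity of \<open>N\<close>\<close>
  have "h \<otimes>\<^bsub>Hol\<^esub> inv\<^bsub>Hol\<^esub> h' = hol_elem (\<beta> - \<beta>') (\<alpha> - \<alpha>') (m - m')"
    unfolding h_eq(1) h'_eq(1) inv_hol_elem mult_hol_elem by simp
  moreover have "h \<otimes>\<^bsub>Hol\<^esub> inv\<^bsub>Hol\<^esub> h' \<in> H"
    using h h' H(1) by (simp add: subgroup.m_closed subgroup.m_inv_closed)
  moreover have "(0, (0, 0)) \<in> carrier N"
    using p_ge_3 by simp
  ultimately have "(m - m') mod P = 0"
    using semiregular_hol_elem_eq_one[OF H(2)] \<open>\<beta> = \<beta>'\<close> \<open>\<alpha> = \<alpha>'\<close>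
    by (metis hol_act_hol_elem diff_self mult_zero_right add.right_neutral mod_0)
  then show "h = h'"
    unfolding h_eq(1) h'_eq(1) using \<open>\<beta> = \<beta>'\<close> \<open>\<alpha> = \<alpha>'\<close> by (simp add: hol_elem_eq_iff mod_eq_dvd_iff dvd_eq_mod_eq_0)
qed

lemma hol_coords_image:
  assumes H: "subgroup H Hol" "semiregular N H" "card H = p * p"
  shows "hol_coords ` H = {0..<P} \<times> {0..<P}"
proof (rule card_subset_eq)
  show "hol_coords ` H \<subseteq> {0..<P} \<times> {0..<P}"
  proof
    fix z assume "z \<in> hol_coords ` H"
    then obtain h where "h \<in> H" "z = hol_coords h"
      by blast
    moreover obtain \<beta> \<alpha> m where "h = hol_elem \<beta> \<alpha> m" "0 \<le> \<beta>" "\<beta> < P" "0 \<le> \<alpha>" "\<alpha> < P"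
      using elem_of_subgroup_of_order_p2[OF H(1,3) \<open>h \<in> H\<close>] .
    ultimately show "z \<in> {0..<P} \<times> {0..<P}"
      by simp
  qed
  show "card (hol_coords ` H) = card ({0..<P} \<times> {0..<P})"
    using card_image[OF inj_on_hol_coords[OF H]] H(3) card_residue_square by simp
qed simp

lemma generators_in_subgroup_of_order_p2:
  assumes H: "subgroup H Hol" "semiregular N H" "card H = p * p"
  obtains k l where "hol_elem 0 1 k \<in> H" "hol_elem 1 0 l \<in> H" "0 \<le> k" "k < P" "0 \<le> l" "l < P"
proof -
  have "(0, 1) \<in> hol_coords ` H" "(1, 0) \<in> hol_coords ` H"
    using hol_coords_image[OF H] p_ge_3 by auto
  then obtain r c where r: "r \<in> H" "hol_coords r = (0, 1)" and c: "c \<in> H" "hol_coords c = (1, 0)"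
    by (metis imageE)
  obtain \<beta> \<alpha> k where "r = hol_elem \<beta> \<alpha> k" "0 \<le> \<beta>" "\<beta> < P" "0 \<le> \<alpha>" "\<alpha> < P"
    using elem_of_subgroup_of_order_p2[OF H(1,3) r(1)] .
  with r p_ge_3 have "r = hol_elem 0 1 (k mod P)"
    by (simp add: hol_elem_eq_iff)
  moreover obtain \<beta>' \<alpha>' l where "c = hol_elem \<beta>' \<alpha>' l" "0 \<le> \<beta>'" "\<beta>' < P" "0 \<le> \<alpha>'" "\<alpha>' < P"
    using elem_of_subgroup_of_order_p2[OF H(1,3) c(1)] .
  with c p_ge_3 have "c = hol_elem 1 0 (l mod P)"
    by (simp add: hol_elem_eq_iff)
  moreover have "0 \<le> k mod P" "k mod P < P" "0 \<le> l mod P" "l mod P < P"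
    using p_ge_3 by simp_all
  ultimately show ?thesis
    using that r(1) c(1) by metis
qed

lemma semiregular_mod_ne_minus_1:
  assumes "semiregular N H" "hol_elem 0 1 k \<in> H"
  shows "k mod P \<noteq> P - 1"
proof
  \<comment> \<open>otherwise \<open>(r, \<phi>\<^sup>k)\<close> fixes \<open>s\<close>\<close>
  assume k: "k mod P = P - 1"
  have "(0, (0, 1)) \<in> carrier N"
    using p_ge_3 by simp
  moreover have "hol_act N (hol_elem 0 1 k) (0, (0, 1)) = (0, (0, 1))"
    using p_ge_3 k by (simp add: hol_act_hol_elem mod_add_right_eq[of 1 k, symmetric])
  ultimately have "1 mod P = 0"
    using semiregular_hol_elem_eq_one[OF assms] by blast
  then show False
    using p_ge_3 by simp
qed

lemma semiregular_subgroup_eq_A_set: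
  assumes H: "subgroup H Hol" "semiregular N H" "card H = p * p"
  obtains k l where "0 \<le> k" "k \<le> P - 2" "0 \<le> l" "l < P" "H = A_set k l"
proof -
  obtain k l where gens: "hol_elem 0 1 k \<in> H" "hol_elem 1 0 l \<in> H" and kl: "0 \<le> k" "k < P" "0 \<le> l" "l < P"
    using generators_in_subgroup_of_order_p2[OF H] .
  have "k \<le> P - 2"
    using semiregular_mod_ne_minus_1[OF H(2) gens(1)] kl(1,2) by simp
  have "A_set k l \<subseteq> H"
    unfolding generate_hol_elem_eq_A_set[symmetric]
    using gens by (intro group.generate_subgroup_incl[OF group_Hol _ H(1)]) auto
  moreover have "finite H"
    using H(3) p_ge_3 by (intro card_ge_0_finite) simp
  ultimately have "A_set k l = H"
    using H(3) card_A_set by (intro card_subset_eq) simp_all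
  then show ?thesis
    using that kl \<open>k \<le> P - 2\<close> by simp
qed

lemma A_set_eq_imp_mod_eq:
  assumes "A_set k l = A_set k' l'"
  shows "k mod P = k' mod P" "l mod P = l' mod P"
proof -
  have "hol_elem 0 1 k \<in> A_set k' l'" "hol_elem 1 0 l \<in> A_set k' l'"
    unfolding assms[symmetric] by (simp_all add: hol_elem_in_A_set_iff)
  then show "k mod P = k' mod P" "l mod P = l' mod P"
    by (simp_all add: hol_elem_in_A_set_iff)
qed

lemma generate_phi_eq_A_set:
  "generate Hol {((0, (1, 0)), \<phi> [^]\<^bsub>AutoGroup N\<^esub> k), ((1, (0, 0)), \<phi> [^]\<^bsub>AutoGroup N\<^esub> l)} = A_set (int k) (int l)"
proof -
  have "((0, (1, 0)), \<phi> [^]\<^bsub>AutoGroup N\<^esub> k) = hol_elem 0 1 (int k)"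
    "((1, (0, 0)), \<phi> [^]\<^bsub>AutoGroup N\<^esub> l) = hol_elem 1 0 (int l)"
    using p_ge_3 by (simp_all add: hol_elem_def pow_phi)
  then show ?thesis
    by (simp add: generate_hol_elem_eq_A_set)
qed

lemma card_A_set_family: "card {A_set (int k) (int l) | k l. k \<le> p - 2 \<and> l \<le> p - 1} = p ^ 2 - p"
proof -
  have "{A_set (int k) (int l) | k l. k \<le> p - 2 \<and> l \<le> p - 1} = (\<lambda>(k, l). A_set (int k) (int l)) ` ({..p - 2} \<times> {..p - 1})"
    unfolding image_def by force
  moreover have "inj_on (\<lambda>(k, l). A_set (int k) (int l)) ({..p - 2} \<times> {..p - 1})"
  proof (rule inj_onI)
    fix x y
    assume x: "x \<in> {..p - 2} \<times> {..p - 1}" and y: "y \<in> {..p - 2} \<times> {..p - 1}"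
      and eq: "(\<lambda>(k, l). A_set (int k) (int l)) x = (\<lambda>(k, l). A_set (int k) (int l)) y"
    obtain k l k' l' where xy: "x = (k, l)" "y = (k', l')"
      by (cases x, cases y)
    have "k < p" "k' < p" "l < p" "l' < p"
      using x y p_ge_3 unfolding xy by (simp_all, linarith+)
    moreover have "int k mod P = int k' mod P" "int l mod P = int l' mod P"
      using A_set_eq_imp_mod_eq[of "int k" "int l" "int k'" "int l'"] eq unfolding xy by simp_all
    ultimately show "x = y"
      unfolding xy by (simp flip: of_nat_mod)
  qed
  moreover have "card ({..p - 2} \<times> {..p - 1}) = p ^ 2 - p"
    using p_ge_3 by (simp add: card_cartesian_product power2_eq_square algebra_simps)
  ultimately show ?thesis
    by (simp add: card_image)
qed

lemma semiregular_subgroups_of_order_p2: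
  "{H. subgroup H Hol \<and> semiregular N H \<and> card H = p ^ 2} = {A_set (int k) (int l) | k l. k \<le> p - 2 \<and> l \<le> p - 1}"
proof (intro equalityI subsetI)
  fix H assume "H \<in> {H. subgroup H Hol \<and> semiregular N H \<and> card H = p ^ 2}"
  then have H: "subgroup H Hol" "semiregular N H" "card H = p * p"
    by (simp_all add: power2_eq_square)
  obtain k l where kl: "0 \<le> k" "k \<le> P - 2" "0 \<le> l" "l < P" "H = A_set k l"
    using semiregular_subgroup_eq_A_set[OF H] .
  then have "H = A_set (int (nat k)) (int (nat l))" "nat k \<le> p - 2" "nat l \<le> p - 1"
    by simp_all
  then show "H \<in> {A_set (int k) (int l) | k l. k \<le> p - 2 \<and> l \<le> p - 1}"
    by blast
next
  fix H assume "H \<in> {A_set (int k) (int l) | k l. k \<le> p - 2 \<and> l \<le> p - 1}"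
  then obtain k l where kl: "k \<le> p - 2" "l \<le> p - 1" "H = A_set (int k) (int l)"
    by blast
  have "int k mod P \<noteq> P - 1"
    using kl(1) p_ge_3 by simp
  then show "H \<in> {H. subgroup H Hol \<and> semiregular N H \<and> card H = p ^ 2}"
    using subgroup_A_set semiregular_A_set card_A_set kl(3) by (simp add: power2_eq_square)
qed

end

theorem lemma17:
  fixes p :: nat and \<phi> :: "int \<times> (int \<times> int) \<Rightarrow> int \<times> (int \<times> int)"
  defines "N \<equiv> integer_mod_group p \<times>\<times> dihedral_group p"
  defines "c \<equiv> (1::int, (0::int, 0::int))"
  defines "r \<equiv> (0::int, (1::int, 0::int))"
  defines "s \<equiv> (0::int, (0::int, 1::int))"
  defines "A \<equiv> (\<lambda>k l. generate (holomorph N)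
                  {(r, \<phi> [^]\<^bsub>AutoGroup N\<^esub> (k::nat)), (c, \<phi> [^]\<^bsub>AutoGroup N\<^esub> (l::nat))})"
  assumes "Factorial_Ring.prime p" and "odd p"
    and "\<phi> \<in> auto N"
    and "\<phi> r = r" and "\<phi> s = r \<otimes>\<^bsub>N\<^esub> s" and "\<phi> c = c"
  shows "(\<forall>k l. k \<le> p - 2 \<and> l \<le> p - 1 \<longrightarrow>
            (holomorph N)\<lparr>carrier := A k l\<rparr> \<cong> integer_mod_group p \<times>\<times> integer_mod_group p)
       \<and> card {A k l | k l. k \<le> p - 2 \<and> l \<le> p - 1} = p ^ 2 - p
       \<and> {H. subgroup H (holomorph N) \<and> semiregular N H \<and> card H = p ^ 2}
           = {A k l | k l. k \<le> p - 2 \<and> l \<le> p - 1}"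
proof -
  interpret cyclic_dihedral_shear p \<phi>
    by unfold_locales (fact assms[unfolded N_def c_def r_def s_def])+
  have A: "A k l = A_set (int k) (int l)" for k l
    unfolding A_def N_def r_def c_def by (rule generate_phi_eq_A_set)
  show ?thesis
    unfolding A N_def
    using A_set_iso_Zp_Zp card_A_set_family semiregular_subgroups_of_order_p2 by blast
qed

end
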